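(* Let $G$ be a countable directed graph and let $x,y\in\mathcal{V}(G)$ with $x\neq y$. If $A\in\mathcal{T}_+(G)$ and $A+\mathcal{K}_{x,y}\in\operatorname{rad}(\mathcal{T}_+(G)/\mathcal{K}_{x,y})$, then $A+\mathcal{K}_{x,y}=P_yAP_x+\mathcal{K}_{x,y}$.
   Context: A countable directed graph $G$ has countable vertex set $\mathcal{V}(G)$, edge set $\mathcal{E}(G)$, range and source maps $r,s$. The free semigroupoid $\mathbb{F}^+(G)$ consists of vertices and finite paths $w=e_k\cdots e_1$ with $s(e_i)=r(e_{i-1})$, $s(w)=s(e_1)$, $r(w)=r(e_k)$. On $\ell^2(\mathbb{F}^+(G))$ with orthonormal basis $\{\xi_w\}$, $L_e\xi_w=\xi_{ew}$ if $s(e)=r(w)$ and $0$ otherwise, and $P_v$ is the projection onto $\overline{\operatorname{span}}\{\xi_w:r(w)=v\}$. $\mathcal{T}_+(G)$ is the norm-closed operator algebra generated by all $L_e$ and $P_v$. $\mathfrak{M}_{G,x}$ is the set of characters $\rho$ of $\mathcal{T}_+(G)$ with $\rho(P_x)=1$. A two-dimensional nest representation is a continuous homomorphism $\pi$ of $\mathcal{T}_+(G)$ onto the algebra of operators on a 2-dimensional Hilbert space leaving a fixed one-dimensional subspace $N$ invariant; with unit vectors $h_2\in N$, $h_1\in N^\perp$, $\rho^{(i)}_\pi(A)=\langle\pi(A)h_i,h_i\rangle$. $\operatorname{rep}_{x,y}(\mathcal{T}_+(G))$ is the set of such $\pi$ with $\rho^{(1)}_\pi\in\mathfrak{M}_{G,x}$,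 $\rho^{(2)}_\pi\in\mathfrak{M}_{G,y}$; $\mathcal{K}_{x,y}=\bigcap\{\ker\pi:\pi\in\operatorname{rep}_{x,y}(\mathcal{T}_+(G))\}$; $\operatorname{rad}$ denotes the Jacobson radical. *)

theory Defs
  imports "HOL-Analysis.Analysis"
begin

text \<open>Elements of the free semigroupoid: a vertex v is encoded as Inl v; a path
  w = e_k ... e_1 (k \<ge> 1) is encoded as Inr [e_k, ..., e_1].\<close>

definition graph :: "'v set \<Rightarrow> 'e set \<Rightarrow> ('e \<Rightarrow> 'v) \<Rightarrow> ('e \<Rightarrow> 'v) \<Rightarrow> bool" where
  "graph V E r s \<longleftrightarrow> r ` E \<subseteq> V \<and> s ` E \<subseteq> V"

definition is_path :: "'e set \<Rightarrow> ('e \<Rightarrow> 'v) \<Rightarrow> ('e \<Rightarrow> 'v) \<Rightarrow> 'e list \<Rightarrow> bool" where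
  "is_path E r s es \<longleftrightarrow> es \<noteq> [] \<and> set es \<subseteq> E \<and>
     (\<forall>i. Suc i < length es \<longrightarrow> s (es ! i) = r (es ! Suc i))"

definition FP :: "'v set \<Rightarrow> 'e set \<Rightarrow> ('e \<Rightarrow> 'v) \<Rightarrow> ('e \<Rightarrow> 'v) \<Rightarrow> ('v + 'e list) set" where
  "FP V E r s = Inl ` V \<union> Inr ` {es. is_path E r s es}"

fun prange :: "('e \<Rightarrow> 'v) \<Rightarrow> ('v + 'e list) \<Rightarrow> 'v" where
  "prange r (Inl v) = v"
| "prange r (Inr es) = r (hd es)"

type_synonym ('v, 'e) vect = "('v + 'e list) \<Rightarrow> complex"
type_synonym ('v, 'e) oper = "('v, 'e) vect \<Rightarrow> ('v, 'e) vect"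

definition ell2 :: "('v + 'e list) set \<Rightarrow> ('v, 'e) vect set" where
  "ell2 F = {f. (\<forall>w. w \<notin> F \<longrightarrow> f w = 0) \<and> (\<lambda>w. (cmod (f w))\<^sup>2) summable_on UNIV}"

definition l2norm :: "('v, 'e) vect \<Rightarrow> real" where
  "l2norm f = sqrt (\<Sum>\<^sub>\<infinity>w. (cmod (f w))\<^sup>2)"

definition vadd :: "('v, 'e) vect \<Rightarrow> ('v, 'e) vect \<Rightarrow> ('v, 'e) vect" where
  "vadd f g = (\<lambda>w. f w + g w)"

definition vsmul :: "complex \<Rightarrow> ('v, 'e) vect \<Rightarrow> ('v, 'e) vect" where
  "vsmul c f = (\<lambda>w. c * f w)"

text \<open>Bounded (complex-linear) operators on l2(F). To make operators extensional they
  are required to send every function outside l2(F) to 0.\<close>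
definition BOp :: "('v + 'e list) set \<Rightarrow> ('v, 'e) oper set" where
  "BOp F = {T. (\<forall>f. f \<notin> ell2 F \<longrightarrow> T f = (\<lambda>_. 0))
     \<and> (\<forall>f\<in>ell2 F. T f \<in> ell2 F)
     \<and> (\<forall>f\<in>ell2 F. \<forall>g\<in>ell2 F. T (vadd f g) = vadd (T f) (T g))
     \<and> (\<forall>c. \<forall>f\<in>ell2 F. T (vsmul c f) = vsmul c (T f))
     \<and> (\<exists>C. \<forall>f\<in>ell2 F. l2norm (T f) \<le> C * l2norm f)}"

definition opnorm :: "('v + 'e list) set \<Rightarrow> ('v, 'e) oper \<Rightarrow> real" where
  "opnorm F T = Sup {l2norm (T f) | f. f \<in> ell2 F \<and> l2norm f \<le> 1}"

definition oadd :: "('v, 'e) oper \<Rightarrow> ('v, 'e) oper \<Rightarrow> ('v, 'e) oper" where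
  "oadd S T = (\<lambda>f. vadd (S f) (T f))"

definition osub :: "('v, 'e) oper \<Rightarrow> ('v, 'e) oper \<Rightarrow> ('v, 'e) oper" where
  "osub S T = (\<lambda>f. (\<lambda>w. S f w - T f w))"

definition osmul :: "complex \<Rightarrow> ('v, 'e) oper \<Rightarrow> ('v, 'e) oper" where
  "osmul c T = (\<lambda>f. vsmul c (T f))"

definition ocomp :: "('v, 'e) oper \<Rightarrow> ('v, 'e) oper \<Rightarrow> ('v, 'e) oper" where
  "ocomp S T = (\<lambda>f. S (T f))"

text \<open>L_e xi_w = xi_{ew} if s(e) = r(w), and 0 otherwise.\<close>
definition Lop :: "'v set \<Rightarrow> 'e set \<Rightarrow> ('e \<Rightarrow> 'v) \<Rightarrow> ('e \<Rightarrow> 'v) \<Rightarrow> 'e \<Rightarrow> ('v, 'e) oper" where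
  "Lop V E r s e = (\<lambda>f. if f \<in> ell2 (FP V E r s) then
     (\<lambda>u. if u \<in> FP V E r s then
        (case u of Inr (e' # rest) \<Rightarrow>
            if e' = e then (if rest = [] then f (Inl (s e)) else f (Inr rest)) else 0
         | _ \<Rightarrow> 0)
      else 0)
     else (\<lambda>_. 0))"

definition Pop :: "'v set \<Rightarrow> 'e set \<Rightarrow> ('e \<Rightarrow> 'v) \<Rightarrow> ('e \<Rightarrow> 'v) \<Rightarrow> 'v \<Rightarrow> ('v, 'e) oper" where
  "Pop V E r s v = (\<lambda>f. if f \<in> ell2 (FP V E r s) then
     (\<lambda>u. if u \<in> FP V E r s \<and> prange r u = v then f u else 0)
     else (\<lambda>_. 0))"

inductive_set gen_alg :: "('v, 'e) oper set \<Rightarrow> ('v, 'e) oper set" for S where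
  gen: "T \<in> S \<Longrightarrow> T \<in> gen_alg S"
| add: "T \<in> gen_alg S \<Longrightarrow> U \<in> gen_alg S \<Longrightarrow> oadd T U \<in> gen_alg S"
| smul: "T \<in> gen_alg S \<Longrightarrow> osmul c T \<in> gen_alg S"
| comp: "T \<in> gen_alg S \<Longrightarrow> U \<in> gen_alg S \<Longrightarrow> ocomp T U \<in> gen_alg S"

definition Tplus :: "'v set \<Rightarrow> 'e set \<Rightarrow> ('e \<Rightarrow> 'v) \<Rightarrow> ('e \<Rightarrow> 'v) \<Rightarrow> ('v, 'e) oper set" where
  "Tplus V E r s = {T. T \<in> BOp (FP V E r s) \<and>
     (\<forall>\<epsilon>>0. \<exists>S\<in>gen_alg (Lop V E r s ` E \<union> Pop V E r s ` V).
        opnorm (FP V E r s) (osub T S) < \<epsilon>)}"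

definition character :: "('v, 'e) oper set \<Rightarrow> (('v, 'e) oper \<Rightarrow> complex) \<Rightarrow> bool" where
  "character T \<rho> \<longleftrightarrow>
     (\<forall>A\<in>T. \<forall>B\<in>T. \<rho> (oadd A B) = \<rho> A + \<rho> B \<and> \<rho> (ocomp A B) = \<rho> A * \<rho> B)
   \<and> (\<forall>c. \<forall>A\<in>T. \<rho> (osmul c A) = c * \<rho> A)
   \<and> (\<exists>A\<in>T. \<rho> A \<noteq> 0)"

definition Mchar :: "'v set \<Rightarrow> 'e set \<Rightarrow> ('e \<Rightarrow> 'v) \<Rightarrow> ('e \<Rightarrow> 'v) \<Rightarrow> 'v
    \<Rightarrow> (('v, 'e) oper \<Rightarrow> complex) set" where
  "Mchar V E r s x = {\<rho>. character (Tplus V E r s) \<rho> \<and> \<rho> (Pop V E r s x) = 1}"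

text \<open>The 2-dimensional Hilbert space is modelled as complex^2 with standard basis,
  h_1 = e_1 (spanning N^perp) and h_2 = e_2 (spanning the invariant subspace N).
  Operators are 2x2 matrices; those leaving N invariant are those with entry (1,2) = 0.\<close>
definition nest_rep :: "'v set \<Rightarrow> 'e set \<Rightarrow> ('e \<Rightarrow> 'v) \<Rightarrow> ('e \<Rightarrow> 'v) \<Rightarrow>
    (('v, 'e) oper \<Rightarrow> complex ^ 2 ^ 2) \<Rightarrow> bool" where
  "nest_rep V E r s \<pi> \<longleftrightarrow>
     (let T = Tplus V E r s; F = FP V E r s in
       (\<forall>A\<in>T. \<forall>B\<in>T. \<pi> (oadd A B) = \<pi> A + \<pi> B \<and> \<pi> (ocomp A B) = \<pi> A ** \<pi> B)
     \<and> (\<forall>c. \<forall>A\<in>T. \<forall>i j. \<pi> (osmul c A) $ i $ j = c * (\<pi> A $ i $ j))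
     \<and> (\<forall>A\<in>T. \<forall>\<epsilon>>0. \<exists>\<delta>>0. \<forall>B\<in>T. opnorm F (osub B A) < \<delta> \<longrightarrow> dist (\<pi> B) (\<pi> A) < \<epsilon>)
     \<and> \<pi> ` T = {M. M $ 1 $ 2 = 0})"

definition rep_xy :: "'v set \<Rightarrow> 'e set \<Rightarrow> ('e \<Rightarrow> 'v) \<Rightarrow> ('e \<Rightarrow> 'v) \<Rightarrow> 'v \<Rightarrow> 'v \<Rightarrow>
    (('v, 'e) oper \<Rightarrow> complex ^ 2 ^ 2) set" where
  "rep_xy V E r s x y = {\<pi>. nest_rep V E r s \<pi>
      \<and> (\<lambda>A. \<pi> A $ 1 $ 1) \<in> Mchar V E r s x
      \<and> (\<lambda>A. \<pi> A $ 2 $ 2) \<in> Mchar V E r s y}"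

definition Kxy :: "'v set \<Rightarrow> 'e set \<Rightarrow> ('e \<Rightarrow> 'v) \<Rightarrow> ('e \<Rightarrow> 'v) \<Rightarrow> 'v \<Rightarrow> 'v \<Rightarrow> ('v, 'e) oper set" where
  "Kxy V E r s x y = {A \<in> Tplus V E r s. \<forall>\<pi>\<in>rep_xy V E r s x y. \<pi> A = 0}"

text \<open>Jacobson radical of a (not necessarily unital) ring with carrier R:
  the set of a such that r*a is left quasi-regular for every r, i.e. there is c with
  c + r a - c (r a) = 0.\<close>
definition jacobson_rad :: "'a set \<Rightarrow> ('a \<Rightarrow> 'a \<Rightarrow> 'a) \<Rightarrow> ('a \<Rightarrow> 'a \<Rightarrow> 'a) \<Rightarrow> 'a set" where
  "jacobson_rad R add mul = {a \<in> R. \<forall>b\<in>R. \<exists>c\<in>R. add c (mul b a) = mul c (mul b a)}"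

definition coset :: "('v, 'e) oper set \<Rightarrow> ('v, 'e) oper \<Rightarrow> ('v, 'e) oper set" where
  "coset K A = {oadd A k | k. k \<in> K}"

definition qrep :: "('v, 'e) oper set \<Rightarrow> ('v, 'e) oper" where
  "qrep X = (SOME A. A \<in> X)"

definition qadd :: "('v, 'e) oper set \<Rightarrow> ('v, 'e) oper set \<Rightarrow> ('v, 'e) oper set \<Rightarrow> ('v, 'e) oper set" where
  "qadd K X Y = coset K (oadd (qrep X) (qrep Y))"

definition qmul :: "('v, 'e) oper set \<Rightarrow> ('v, 'e) oper set \<Rightarrow> ('v, 'e) oper set \<Rightarrow> ('v, 'e) oper set" where
  "qmul K X Y = coset K (ocomp (qrep X) (qrep Y))"

definition quot_carrier :: "('v, 'e) oper set \<Rightarrow> ('v, 'e) oper set \<Rightarrow> ('v, 'e) oper set set" where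
  "quot_carrier T K = coset K ` T"

end

theory Submission
  imports Defs
begin

text \<open>Every representation \<open>\<pi>\<close> in rep_{x,y} vanishes on K_{x,y}, so each diagonal entry
  of \<open>\<pi>\<close> induces a character of T_+(G)/K_{x,y}, onto the complex numbers because \<open>\<pi>\<close> maps
  onto the triangular matrices. A surjective character kills the Jacobson radical: if
  phi(a) is nonzero, pick b with phi(b) phi(a) = 1; quasi-regularity c + ba = c(ba) then gives
  phi(c) + 1 = phi(c). Hence \<open>\<pi>\<close>(A) has zero diagonal, and since \<open>\<pi>\<close>(P_x) and \<open>\<pi>\<close>(P_y) have
  the entries 1 at positions (1,1) and (2,2) respectively, multiplying out triangular matrices
  gives \<open>\<pi>\<close>(P_y A P_x) = \<open>\<pi>\<close>(A). So A - P_y A P_x lies in K_{x,y}.\<close>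

section \<open>Square-summable functions\<close>

lemma ell2_zero: "(\<lambda>_. 0) \<in> ell2 F"
  by (simp add: ell2_def)

lemma ell2_vsmul:
  assumes "f \<in> ell2 F"
  shows "vsmul c f \<in> ell2 F"
proof -
  have "(\<lambda>w. (cmod c)\<^sup>2 * (cmod (f w))\<^sup>2) summable_on UNIV"
    using assms by (intro summable_on_cmult_right) (simp add: ell2_def)
  then show ?thesis
    using assms by (simp add: ell2_def vsmul_def norm_mult power_mult_distrib)
qed

lemma ell2_vadd:
  assumes f: "f \<in> ell2 F" and g: "g \<in> ell2 F"
  shows "vadd f g \<in> ell2 F"
proof -
  have sq_add_le: "(cmod (a + b))\<^sup>2 \<le> 2 * (cmod a)\<^sup>2 + 2 * (cmod b)\<^sup>2" for a b :: complex
  proof -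
    have "(cmod (a + b))\<^sup>2 \<le> (cmod a + cmod b)\<^sup>2"
      by (simp add: power_mono norm_triangle_ineq)
    also have "\<dots> \<le> 2 * (cmod a)\<^sup>2 + 2 * (cmod b)\<^sup>2"
      by (smt (verit) sum_squares_bound power2_sum)
    finally show ?thesis .
  qed
  have "(\<lambda>w. 2 * (cmod (f w))\<^sup>2 + 2 * (cmod (g w))\<^sup>2) summable_on UNIV"
    using f g by (intro summable_on_add summable_on_cmult_right) (auto simp: ell2_def)
  then have "(\<lambda>w. (cmod (f w + g w))\<^sup>2) summable_on UNIV"
    by (rule summable_on_comparison_test) (auto simp: sq_add_le)
  then show ?thesis
    using f g by (simp add: ell2_def vadd_def)
qed

lemma l2norm_nonneg: "0 \<le> l2norm f"
  unfolding l2norm_def by (intro real_sqrt_ge_zero infsum_nonneg) auto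

lemma l2norm_zero [simp]: "l2norm (\<lambda>_. 0) = 0"
  by (simp add: l2norm_def)

lemma l2norm_vsmul: "l2norm (vsmul c f) = cmod c * l2norm f"
proof -
  have "(\<Sum>\<^sub>\<infinity>w. (cmod (vsmul c f w))\<^sup>2) = (cmod c)\<^sup>2 * (\<Sum>\<^sub>\<infinity>w. (cmod (f w))\<^sup>2)"
    by (simp add: vsmul_def norm_mult power_mult_distrib infsum_cmult_right')
  then show ?thesis
    by (simp add: l2norm_def real_sqrt_mult)
qed

text \<open>Minkowski's inequality: the finite version for \<open>L2_set\<close> passes to the supremum
  over finite sets.\<close>
lemma l2norm_triangle:
  assumes f: "f \<in> ell2 F" and g: "g \<in> ell2 F"
  shows "l2norm (vadd f g) \<le> l2norm f + l2norm g"
proof -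
  let ?c = "\<lambda>w. (cmod (f w + g w))\<^sup>2"
  have L2_set_le_l2norm: "L2_set (\<lambda>w. cmod (h w)) X \<le> l2norm h"
    if "h \<in> ell2 F" "finite X" for h X
    unfolding L2_set_def l2norm_def
    using that by (intro real_sqrt_le_mono finite_sum_le_infsum) (auto simp: ell2_def)
  have finite_bound: "sum ?c X \<le> (l2norm f + l2norm g)\<^sup>2" if X: "finite X" for X
  proof -
    have "L2_set (\<lambda>w. cmod (f w + g w)) X \<le> L2_set (\<lambda>w. cmod (f w) + cmod (g w)) X"
      by (rule L2_set_mono) (auto simp: norm_triangle_ineq)
    also have "\<dots> \<le> L2_set (\<lambda>w. cmod (f w)) X + L2_set (\<lambda>w. cmod (g w)) X"
      by (rule L2_set_triangle_ineq)
    also have "\<dots> \<le> l2norm f + l2norm g"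
      using L2_set_le_l2norm f g X by (intro add_mono)
    finally have "L2_set (\<lambda>w. cmod (f w + g w)) X \<le> l2norm f + l2norm g" .
    then have "(L2_set (\<lambda>w. cmod (f w + g w)) X)\<^sup>2 \<le> (l2norm f + l2norm g)\<^sup>2"
      by (rule power_mono[OF _ L2_set_nonneg])
    then show ?thesis
      unfolding L2_set_def by (simp add: sum_nonneg)
  qed
  have "?c summable_on UNIV"
    using ell2_vadd[OF f g] by (simp add: ell2_def vadd_def)
  then have "infsum ?c UNIV = (SUP X\<in>{X. finite X \<and> X \<subseteq> UNIV}. sum ?c X)"
    by (rule infsum_nonneg_is_SUPREMUM_real) auto
  also have "\<dots> \<le> (l2norm f + l2norm g)\<^sup>2"
    by (rule cSUP_least) (auto intro: finite_bound)
  finally have "sqrt (infsum ?c UNIV) \<le> sqrt ((l2norm f + l2norm g)\<^sup>2)"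
    by (rule real_sqrt_le_mono)
  then show ?thesis
    using l2norm_nonneg[of f] l2norm_nonneg[of g] by (simp add: l2norm_def vadd_def)
qed

lemma l2_dominated_reindex:
  assumes f: "(\<lambda>w. (cmod (f w))\<^sup>2) summable_on UNIV"
    and inj: "inj_on \<phi> D" and vanish: "\<And>u. u \<notin> D \<Longrightarrow> h u = 0"
    and dominated: "\<And>u. u \<in> D \<Longrightarrow> cmod (h u) \<le> cmod (f (\<phi> u))"
  shows "(\<lambda>w. (cmod (h w))\<^sup>2) summable_on UNIV \<and> l2norm h \<le> l2norm f"
proof -
  let ?q = "\<lambda>w. (cmod (f w))\<^sup>2" and ?p = "\<lambda>w. (cmod (h w))\<^sup>2"
  have "?q summable_on (\<phi> ` D)"
    using f by (rule summable_on_subset) auto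
  then have q\<phi>: "(?q \<circ> \<phi>) summable_on D"
    using summable_on_reindex[OF inj] by blast
  have pD: "?p summable_on D"
    by (rule summable_on_comparison_test[OF q\<phi>]) (auto intro: power_mono dominated)
  then have "?p summable_on UNIV"
    by (subst summable_on_cong_neutral[where g="?p" and T=D]) (auto simp: vanish)
  have "infsum ?p UNIV = infsum ?p D"
    by (rule infsum_cong_neutral) (auto simp: vanish)
  also have "\<dots> \<le> infsum (?q \<circ> \<phi>) D"
    by (rule infsum_mono[OF pD q\<phi>]) (auto intro: power_mono dominated)
  also have "\<dots> = infsum ?q (\<phi> ` D)"
    by (rule infsum_reindex[OF inj, symmetric])
  also have "\<dots> \<le> infsum ?q UNIV"
    by (rule infsum_mono_neutral) (auto intro: summable_on_subset[OF f] f)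
  finally show ?thesis
    using \<open>?p summable_on UNIV\<close> by (simp add: l2norm_def)
qed

section \<open>Bounded operators and the operator norm\<close>

lemma BOpD:
  assumes "T \<in> BOp F"
  shows BOp_outside: "f \<notin> ell2 F \<Longrightarrow> T f = (\<lambda>_. 0)"
    and BOp_vadd: "f \<in> ell2 F \<Longrightarrow> g \<in> ell2 F \<Longrightarrow> T (vadd f g) = vadd (T f) (T g)"
    and BOp_vsmul: "f \<in> ell2 F \<Longrightarrow> T (vsmul c f) = vsmul c (T f)"
    and BOp_bounded: "\<exists>C. \<forall>f\<in>ell2 F. l2norm (T f) \<le> C * l2norm f"
  using assms by (auto simp: BOp_def)

lemma BOp_ell2: "T \<in> BOp F \<Longrightarrow> T f \<in> ell2 F"
  by (cases "f \<in> ell2 F") (auto simp: BOp_def ell2_zero)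

lemma BOpI:
  assumes "\<And>f. f \<notin> ell2 F \<Longrightarrow> T f = (\<lambda>_. 0)"
    and "\<And>f. f \<in> ell2 F \<Longrightarrow> T f \<in> ell2 F"
    and "\<And>f g. f \<in> ell2 F \<Longrightarrow> g \<in> ell2 F \<Longrightarrow> T (vadd f g) = vadd (T f) (T g)"
    and "\<And>c f. f \<in> ell2 F \<Longrightarrow> T (vsmul c f) = vsmul c (T f)"
    and "\<And>f. f \<in> ell2 F \<Longrightarrow> l2norm (T f) \<le> C * l2norm f"
  shows "T \<in> BOp F"
  unfolding BOp_def using assms by blast

lemma BOp_zero: "T \<in> BOp F \<Longrightarrow> T (\<lambda>_. 0) = (\<lambda>_. 0)"
  using BOp_vsmul[of T F "\<lambda>_. 0" 0] by (simp add: ell2_zero vsmul_def)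

lemma BOp_diff:
  assumes T: "T \<in> BOp F" and g: "g \<in> ell2 F" and h: "h \<in> ell2 F"
  shows "T (\<lambda>w. g w - h w) = (\<lambda>w. T g w - T h w)"
proof -
  have diff: "(\<lambda>w. g w - h w) = vadd g (vsmul (-1) h)"
    by (simp add: vadd_def vsmul_def)
  have "T (vadd g (vsmul (-1) h)) = vadd (T g) (vsmul (-1) (T h))"
    by (simp only: BOp_vadd[OF T g ell2_vsmul[OF h]] BOp_vsmul[OF T h])
  then show ?thesis
    unfolding diff by (simp add: vadd_def vsmul_def)
qed

lemma opnorm_set_nonempty: "{l2norm (T f) | f. f \<in> ell2 F \<and> l2norm f \<le> 1} \<noteq> {}"
  using ell2_zero by fastforce

lemma opnorm_set_bdd_above:
  assumes "T \<in> BOp F"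
  shows "bdd_above {l2norm (T f) | f. f \<in> ell2 F \<and> l2norm f \<le> 1}"
proof -
  obtain C where C: "\<forall>f\<in>ell2 F. l2norm (T f) \<le> C * l2norm f"
    using BOp_bounded[OF assms] by blast
  have "l2norm (T f) \<le> \<bar>C\<bar>" if "f \<in> ell2 F" "l2norm f \<le> 1" for f
  proof -
    have "l2norm (T f) \<le> C * l2norm f"
      using C that by blast
    also have "\<dots> \<le> \<bar>C\<bar> * 1"
      using that l2norm_nonneg[of f] by (intro mult_mono) auto
    finally show ?thesis by simp
  qed
  then show ?thesis
    by (auto intro!: bdd_aboveI[where M="\<bar>C\<bar>"])
qed

lemma opnorm_upper:
  assumes "T \<in> BOp F" "f \<in> ell2 F" "l2norm f \<le> 1"
  shows "l2norm (T f) \<le> opnorm F T"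
  unfolding opnorm_def using assms by (intro cSup_upper opnorm_set_bdd_above) auto

lemma opnorm_least:
  assumes "\<And>f. f \<in> ell2 F \<Longrightarrow> l2norm f \<le> 1 \<Longrightarrow> l2norm (T f) \<le> M"
  shows "opnorm F T \<le> M"
  unfolding opnorm_def using assms by (intro cSup_least[OF opnorm_set_nonempty]) auto

lemma opnorm_nonneg: "T \<in> BOp F \<Longrightarrow> 0 \<le> opnorm F T"
  using opnorm_upper[OF _ ell2_zero, of T F] l2norm_nonneg[of "T (\<lambda>_. 0)"] by simp

lemma opnorm_bound:
  assumes T: "T \<in> BOp F" and f: "f \<in> ell2 F"
  shows "l2norm (T f) \<le> opnorm F T * l2norm f"
proof (cases "l2norm f = 0")
  case True
  obtain C where "\<forall>f\<in>ell2 F. l2norm (T f) \<le> C * l2norm f"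
    using BOp_bounded[OF T] by blast
  then have "l2norm (T f) \<le> 0"
    using f True by force
  then show ?thesis
    using True by simp
next
  case False
  then have pos: "0 < l2norm f"
    using l2norm_nonneg[of f] by simp
  let ?g = "vsmul (complex_of_real (1 / l2norm f)) f"
  have "l2norm (T ?g) \<le> opnorm F T"
    using pos by (intro opnorm_upper[OF T ell2_vsmul[OF f]]) (simp add: l2norm_vsmul norm_divide)
  moreover have "l2norm (T ?g) = l2norm (T f) / l2norm f"
    using pos by (simp add: BOp_vsmul[OF T f] l2norm_vsmul norm_divide)
  ultimately show ?thesis
    using pos by (simp add: pos_divide_le_eq)
qed

lemma opnorm_oadd_le:
  assumes S: "S \<in> BOp F" and T: "T \<in> BOp F"
  shows "opnorm F (oadd S T) \<le> opnorm F S + opnorm F T"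
proof (rule opnorm_least)
  fix f assume f: "f \<in> ell2 F" "l2norm f \<le> 1"
  have "l2norm (oadd S T f) \<le> l2norm (S f) + l2norm (T f)"
    unfolding oadd_def using S T by (intro l2norm_triangle BOp_ell2)
  also have "\<dots> \<le> opnorm F S + opnorm F T"
    using S T f by (intro add_mono opnorm_upper)
  finally show "l2norm (oadd S T f) \<le> opnorm F S + opnorm F T" .
qed

lemma opnorm_osmul_le:
  assumes T: "T \<in> BOp F"
  shows "opnorm F (osmul c T) \<le> cmod c * opnorm F T"
proof (rule opnorm_least)
  fix f assume "f \<in> ell2 F" "l2norm f \<le> 1"
  then show "l2norm (osmul c T f) \<le> cmod c * opnorm F T"
    using T by (simp add: osmul_def l2norm_vsmul mult_left_mono opnorm_upper)
qed

lemma opnorm_ocomp_le: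
  assumes S: "S \<in> BOp F" and T: "T \<in> BOp F"
  shows "opnorm F (ocomp S T) \<le> opnorm F S * opnorm F T"
proof (rule opnorm_least)
  fix f assume f: "f \<in> ell2 F" "l2norm f \<le> 1"
  have "l2norm (S (T f)) \<le> opnorm F S * l2norm (T f)"
    using S T by (intro opnorm_bound BOp_ell2)
  also have "\<dots> \<le> opnorm F S * opnorm F T"
    using S T f by (intro mult_left_mono opnorm_upper opnorm_nonneg)
  finally show "l2norm (ocomp S T f) \<le> opnorm F S * opnorm F T"
    by (simp add: ocomp_def)
qed

lemma BOp_oadd:
  assumes S: "S \<in> BOp F" and T: "T \<in> BOp F"
  shows "oadd S T \<in> BOp F"
proof (rule BOpI)
  fix f g assume "f \<in> ell2 F" "g \<in> ell2 F"
  then show "oadd S T (vadd f g) = vadd (oadd S T f) (oadd S T g)"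
    using S T by (simp add: oadd_def BOp_vadd) (simp add: vadd_def add_ac)
next
  fix c f assume "f \<in> ell2 F"
  then show "oadd S T (vsmul c f) = vsmul c (oadd S T f)"
    using S T by (simp add: oadd_def BOp_vsmul) (simp add: vadd_def vsmul_def distrib_left)
next
  fix f assume f: "f \<in> ell2 F"
  have "l2norm (oadd S T f) \<le> l2norm (S f) + l2norm (T f)"
    unfolding oadd_def using S T by (intro l2norm_triangle BOp_ell2)
  also have "\<dots> \<le> (opnorm F S + opnorm F T) * l2norm f"
    using S T f by (simp add: distrib_right add_mono opnorm_bound)
  finally show "l2norm (oadd S T f) \<le> (opnorm F S + opnorm F T) * l2norm f" .
qed (use S T in \<open>auto simp: oadd_def vadd_def BOp_outside intro: ell2_vadd[unfolded vadd_def] BOp_ell2\<close>)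

lemma BOp_osmul:
  assumes T: "T \<in> BOp F"
  shows "osmul c T \<in> BOp F"
proof (rule BOpI)
  fix f g assume "f \<in> ell2 F" "g \<in> ell2 F"
  then show "osmul c T (vadd f g) = vadd (osmul c T f) (osmul c T g)"
    using T by (simp add: osmul_def BOp_vadd) (simp add: vadd_def vsmul_def distrib_left)
next
  fix d f assume "f \<in> ell2 F"
  then show "osmul c T (vsmul d f) = vsmul d (osmul c T f)"
    using T by (simp add: osmul_def BOp_vsmul) (simp add: vsmul_def ac_simps)
next
  fix f assume "f \<in> ell2 F"
  then show "l2norm (osmul c T f) \<le> (cmod c * opnorm F T) * l2norm f"
    using T by (simp add: osmul_def l2norm_vsmul mult.assoc mult_left_mono opnorm_bound)
qed (use T in \<open>auto simp: osmul_def vsmul_def BOp_outside intro: ell2_vsmul[unfolded vsmul_def] BOp_ell2\<close>)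

lemma BOp_ocomp:
  assumes S: "S \<in> BOp F" and T: "T \<in> BOp F"
  shows "ocomp S T \<in> BOp F"
proof (rule BOpI)
  fix f g assume "f \<in> ell2 F" "g \<in> ell2 F"
  then show "ocomp S T (vadd f g) = vadd (ocomp S T f) (ocomp S T g)"
    using S T by (simp add: ocomp_def BOp_vadd BOp_ell2)
next
  fix c f assume "f \<in> ell2 F"
  then show "ocomp S T (vsmul c f) = vsmul c (ocomp S T f)"
    using S T by (simp add: ocomp_def BOp_vsmul BOp_ell2)
next
  fix f assume f: "f \<in> ell2 F"
  have "l2norm (S (T f)) \<le> opnorm F S * l2norm (T f)"
    using S T by (intro opnorm_bound BOp_ell2)
  also have "\<dots> \<le> opnorm F S * (opnorm F T * l2norm f)"
    using S T f by (intro mult_left_mono opnorm_bound opnorm_nonneg)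
  finally show "l2norm (ocomp S T f) \<le> (opnorm F S * opnorm F T) * l2norm f"
    by (simp add: ocomp_def mult.assoc)
qed (use S T in \<open>auto simp: ocomp_def BOp_outside BOp_zero intro: BOp_ell2\<close>)

lemma osub_eq_oadd_osmul: "osub S T = oadd S (osmul (-1) T)"
  by (simp add: osub_def oadd_def osmul_def vadd_def vsmul_def)

lemma BOp_osub: "S \<in> BOp F \<Longrightarrow> T \<in> BOp F \<Longrightarrow> osub S T \<in> BOp F"
  unfolding osub_eq_oadd_osmul by (intro BOp_oadd BOp_osmul)

lemma opnorm_osub_self: "opnorm F (osub T T) = 0"
proof -
  have "{l2norm (osub T T f) | f. f \<in> ell2 F \<and> l2norm f \<le> 1} = {0}"
    using opnorm_set_nonempty[of "osub T T" F] by (auto simp: osub_def)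
  then show ?thesis
    by (simp add: opnorm_def)
qed

section \<open>T_+(G) is an algebra\<close>

lemma Pop_BOp: "Pop V E r s v \<in> BOp (FP V E r s)"
proof -
  let ?F = "FP V E r s" and ?P = "Pop V E r s v"
  have dominated: "(\<lambda>w. (cmod (?P f w))\<^sup>2) summable_on UNIV \<and> l2norm (?P f) \<le> l2norm f"
    if f: "f \<in> ell2 ?F" for f
  proof (rule l2_dominated_reindex[where \<phi>=id and D="{u \<in> ?F. prange r u = v}"])
    show "(\<lambda>w. (cmod (f w))\<^sup>2) summable_on UNIV"
      using f by (simp add: ell2_def)
  qed (use f in \<open>auto simp: Pop_def\<close>)
  show ?thesis
  proof (rule BOpI)
    fix f g assume "f \<in> ell2 ?F" "g \<in> ell2 ?F"
    moreover from this have "vadd f g \<in> ell2 ?F"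
      by (rule ell2_vadd)
    ultimately show "?P (vadd f g) = vadd (?P f) (?P g)"
      by (simp add: Pop_def vadd_def fun_eq_iff)
  next
    fix c f assume "f \<in> ell2 ?F"
    moreover from this have "vsmul c f \<in> ell2 ?F"
      by (rule ell2_vsmul)
    ultimately show "?P (vsmul c f) = vsmul c (?P f)"
      by (simp add: Pop_def vsmul_def fun_eq_iff)
  next
    fix f assume "f \<in> ell2 ?F"
    then show "l2norm (?P f) \<le> 1 * l2norm f"
      using dominated by simp
  qed (use dominated in \<open>auto simp: Pop_def ell2_def\<close>)
qed

lemma Lop_BOp:
  fixes V :: "'v set" and E :: "'e set"
  shows "Lop V E r s e \<in> BOp (FP V E r s)"
proof -
  let ?F = "FP V E r s" and ?L = "Lop V E r s e"
  let ?D = "{u \<in> ?F. \<exists>rest. u = Inr (e # rest)}"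
  define tail :: "'v + 'e list \<Rightarrow> 'v + 'e list" where
    "tail u = (case u of Inr (e' # rest) \<Rightarrow> (if rest = [] then Inl (s e) else Inr rest) | _ \<Rightarrow> u)" for u
  have inj: "inj_on tail ?D"
    by (auto simp: inj_on_def tail_def split: if_splits)
  have dominated: "(\<lambda>w. (cmod (?L f w))\<^sup>2) summable_on UNIV \<and> l2norm (?L f) \<le> l2norm f"
    if f: "f \<in> ell2 ?F" for f
  proof (rule l2_dominated_reindex[OF _ inj])
    show "(\<lambda>w. (cmod (f w))\<^sup>2) summable_on UNIV"
      using f by (simp add: ell2_def)
  qed (use f in \<open>auto simp: Lop_def tail_def split: sum.splits list.splits\<close>)
  show ?thesis
  proof (rule BOpI)
    fix f g assume "f \<in> ell2 ?F" "g \<in> ell2 ?F"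
    moreover from this have "vadd f g \<in> ell2 ?F"
      by (rule ell2_vadd)
    ultimately show "?L (vadd f g) = vadd (?L f) (?L g)"
      by (simp add: Lop_def vadd_def fun_eq_iff split: sum.split list.split)
  next
    fix c f assume "f \<in> ell2 ?F"
    moreover from this have "vsmul c f \<in> ell2 ?F"
      by (rule ell2_vsmul)
    ultimately show "?L (vsmul c f) = vsmul c (?L f)"
      by (simp add: Lop_def vsmul_def fun_eq_iff split: sum.split list.split)
  next
    fix f assume "f \<in> ell2 ?F"
    then show "l2norm (?L f) \<le> 1 * l2norm f"
      using dominated by simp
  qed (use dominated in \<open>auto simp: Lop_def ell2_def\<close>)
qed

abbreviation generators :: "'v set \<Rightarrow> 'e set \<Rightarrow> ('e \<Rightarrow> 'v) \<Rightarrow> ('e \<Rightarrow> 'v) \<Rightarrow> ('v, 'e) oper set"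
  where "generators V E r s \<equiv> Lop V E r s ` E \<union> Pop V E r s ` V"

lemma gen_alg_BOp: "S \<in> gen_alg (generators V E r s) \<Longrightarrow> S \<in> BOp (FP V E r s)"
  by (induction rule: gen_alg.induct) (auto intro: Lop_BOp Pop_BOp BOp_oadd BOp_osmul BOp_ocomp)

lemma TplusI:
  assumes "T \<in> BOp (FP V E r s)"
    and "\<And>\<epsilon>. 0 < \<epsilon> \<Longrightarrow> \<exists>S\<in>gen_alg (generators V E r s). opnorm (FP V E r s) (osub T S) < \<epsilon>"
  shows "T \<in> Tplus V E r s"
  using assms by (simp add: Tplus_def)

lemma TplusD:
  assumes "T \<in> Tplus V E r s"
  shows Tplus_BOp: "T \<in> BOp (FP V E r s)"
    and Tplus_approx: "0 < \<epsilon> \<Longrightarrow>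
      \<exists>S\<in>gen_alg (generators V E r s). opnorm (FP V E r s) (osub T S) < \<epsilon>"
  using assms by (auto simp: Tplus_def)

lemma gen_alg_Tplus: "S \<in> gen_alg (generators V E r s) \<Longrightarrow> S \<in> Tplus V E r s"
  by (intro TplusI gen_alg_BOp) (auto simp: opnorm_osub_self intro!: bexI[of _ S])

lemma mult_less_if_less_divide_plus_one:
  fixes n a e :: real
  assumes "0 \<le> n" "0 \<le> a" "a < e / (n + 1)"
  shows "n * a < e"
proof -
  have "n * a \<le> (n + 1) * a"
    using assms by (simp add: mult_right_mono)
  also have "\<dots> < e"
    using assms by (simp add: pos_less_divide_eq mult.commute add_nonneg_pos)
  finally show ?thesis .
qed

lemma Tplus_oadd:
  assumes T: "T \<in> Tplus V E r s" and U: "U \<in> Tplus V E r s"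
  shows "oadd T U \<in> Tplus V E r s"
proof (rule TplusI)
  let ?F = "FP V E r s"
  show "oadd T U \<in> BOp ?F"
    using T U by (intro BOp_oadd Tplus_BOp)
  fix \<epsilon> :: real assume "0 < \<epsilon>"
  then have half: "0 < \<epsilon> / 2"
    by simp
  obtain S where S: "S \<in> gen_alg (generators V E r s)" "opnorm ?F (osub T S) < \<epsilon> / 2"
    using Tplus_approx[OF T half] by blast
  obtain S' where S': "S' \<in> gen_alg (generators V E r s)" "opnorm ?F (osub U S') < \<epsilon> / 2"
    using Tplus_approx[OF U half] by blast
  have "osub (oadd T U) (oadd S S') = oadd (osub T S) (osub U S')"
    by (simp add: osub_def oadd_def vadd_def fun_eq_iff)
  then have "opnorm ?F (osub (oadd T U) (oadd S S')) \<le> opnorm ?F (osub T S) + opnorm ?F (osub U S')"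
    using T U S S' by (simp add: opnorm_oadd_le BOp_osub Tplus_BOp gen_alg_BOp)
  then show "\<exists>S\<in>gen_alg (generators V E r s). opnorm ?F (osub (oadd T U) S) < \<epsilon>"
    using S S' by (intro bexI[of _ "oadd S S'"] gen_alg.add) auto
qed

lemma Tplus_osmul:
  assumes T: "T \<in> Tplus V E r s"
  shows "osmul c T \<in> Tplus V E r s"
proof (rule TplusI)
  let ?F = "FP V E r s"
  show "osmul c T \<in> BOp ?F"
    using T by (intro BOp_osmul Tplus_BOp)
  fix \<epsilon> :: real assume "0 < \<epsilon>"
  then have "0 < \<epsilon> / (cmod c + 1)"
    by (simp add: add_nonneg_pos)
  then obtain S where S: "S \<in> gen_alg (generators V E r s)"
    and approx: "opnorm ?F (osub T S) < \<epsilon> / (cmod c + 1)"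
    using Tplus_approx[OF T] by blast
  have TS: "osub T S \<in> BOp ?F"
    using T S by (intro BOp_osub Tplus_BOp gen_alg_BOp)
  have "osub (osmul c T) (osmul c S) = osmul c (osub T S)"
    by (simp add: osub_def osmul_def vsmul_def right_diff_distrib)
  then have "opnorm ?F (osub (osmul c T) (osmul c S)) \<le> cmod c * opnorm ?F (osub T S)"
    using TS by (simp add: opnorm_osmul_le)
  also have "\<dots> < \<epsilon>"
    using approx opnorm_nonneg[OF TS] by (intro mult_less_if_less_divide_plus_one) auto
  finally show "\<exists>S\<in>gen_alg (generators V E r s). opnorm ?F (osub (osmul c T) S) < \<epsilon>"
    using S by (intro bexI[of _ "osmul c S"] gen_alg.smul)
qed

lemma osub_ocomp_ocomp:
  assumes "T \<in> BOp F" "U \<in> BOp F" "S' \<in> BOp F"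
  shows "osub (ocomp T U) (ocomp S S') = oadd (ocomp T (osub U S')) (ocomp (osub T S) S')"
proof -
  have "T (\<lambda>w. U f w - S' f w) = (\<lambda>w. T (U f) w - T (S' f) w)" for f
    using assms by (intro BOp_diff BOp_ell2)
  then show ?thesis
    by (simp add: osub_def ocomp_def oadd_def vadd_def fun_eq_iff)
qed

lemma Tplus_ocomp:
  assumes T: "T \<in> Tplus V E r s" and U: "U \<in> Tplus V E r s"
  shows "ocomp T U \<in> Tplus V E r s"
proof (rule TplusI)
  let ?F = "FP V E r s" and ?G = "gen_alg (generators V E r s)"
  have TB: "T \<in> BOp ?F" and UB: "U \<in> BOp ?F"
    using T U by (auto intro: Tplus_BOp)
  then show "ocomp T U \<in> BOp ?F"
    by (rule BOp_ocomp)
  fix \<epsilon> :: real assume \<epsilon>: "0 < \<epsilon>"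
  txt \<open>S' is chosen first, so that the tolerance for S may depend on the norm of S'.\<close>
  let ?nT = "opnorm ?F T"
  have "0 < \<epsilon> / 2 / (?nT + 1)"
    using \<epsilon> opnorm_nonneg[OF TB] by simp
  then obtain S' where S': "S' \<in> ?G" and b: "opnorm ?F (osub U S') < \<epsilon> / 2 / (?nT + 1)"
    using Tplus_approx[OF U] by blast
  have S'B: "S' \<in> BOp ?F"
    using S' by (rule gen_alg_BOp)
  let ?nS' = "opnorm ?F S'"
  have "0 < \<epsilon> / 2 / (?nS' + 1)"
    using \<epsilon> opnorm_nonneg[OF S'B] by simp
  then obtain S where S: "S \<in> ?G" and a: "opnorm ?F (osub T S) < \<epsilon> / 2 / (?nS' + 1)"
    using Tplus_approx[OF T] by blast
  have US': "osub U S' \<in> BOp ?F" and TS: "osub T S \<in> BOp ?F"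
    using TB UB S'B S by (auto intro: BOp_osub gen_alg_BOp)
  have "opnorm ?F (osub (ocomp T U) (ocomp S S'))
      \<le> opnorm ?F (ocomp T (osub U S')) + opnorm ?F (ocomp (osub T S) S')"
    using TB US' TS S'B
    by (simp add: osub_ocomp_ocomp[OF TB UB S'B] opnorm_oadd_le BOp_ocomp)
  also have "\<dots> \<le> ?nT * opnorm ?F (osub U S') + opnorm ?F (osub T S) * ?nS'"
    using TB US' TS S'B by (intro add_mono opnorm_ocomp_le)
  also have "\<dots> < \<epsilon> / 2 + \<epsilon> / 2"
  proof (rule add_strict_mono)
    show "?nT * opnorm ?F (osub U S') < \<epsilon> / 2"
      using opnorm_nonneg[OF TB] opnorm_nonneg[OF US'] b by (rule mult_less_if_less_divide_plus_one)
    show "opnorm ?F (osub T S) * ?nS' < \<epsilon> / 2"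
      using mult_less_if_less_divide_plus_one[OF opnorm_nonneg[OF S'B] opnorm_nonneg[OF TS] a]
      by (simp add: mult.commute)
  qed
  finally show "\<exists>S\<in>?G. opnorm ?F (osub (ocomp T U) S) < \<epsilon>"
    using S S' by (intro bexI[of _ "ocomp S S'"] gen_alg.comp) auto
qed

definition ozero :: "('v, 'e) oper" where
  "ozero = (\<lambda>_ _. 0)"

lemma oadd_ozero [simp]: "oadd X ozero = X"
  by (simp add: oadd_def vadd_def ozero_def)

lemma ozero_Tplus:
  assumes "x \<in> V"
  shows "ozero \<in> Tplus V E r s"
proof -
  have "osmul 0 (Pop V E r s x) \<in> Tplus V E r s"
    using assms by (intro gen_alg_Tplus gen_alg.smul gen_alg.gen) auto
  then show ?thesis
    by (simp add: osmul_def vsmul_def ozero_def)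
qed

section \<open>Nest representations and the quotient by K_{x,y}\<close>

lemma rep_xyD:
  assumes "\<pi> \<in> rep_xy V E r s x y"
  shows rep_xy_oadd: "A \<in> Tplus V E r s \<Longrightarrow> B \<in> Tplus V E r s \<Longrightarrow> \<pi> (oadd A B) = \<pi> A + \<pi> B"
    and rep_xy_ocomp: "A \<in> Tplus V E r s \<Longrightarrow> B \<in> Tplus V E r s \<Longrightarrow> \<pi> (ocomp A B) = \<pi> A ** \<pi> B"
    and rep_xy_osmul: "A \<in> Tplus V E r s \<Longrightarrow> \<pi> (osmul c A) $ i $ j = c * \<pi> A $ i $ j"
    and rep_xy_image: "\<pi> ` Tplus V E r s = {M. M $ 1 $ 2 = 0}"
    and rep_xy_Pop_11: "\<pi> (Pop V E r s x) $ 1 $ 1 = 1"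
    and rep_xy_Pop_22: "\<pi> (Pop V E r s y) $ 2 $ 2 = 1"
proof -
  have "nest_rep V E r s \<pi>"
    and x: "(\<lambda>A. \<pi> A $ 1 $ 1) \<in> Mchar V E r s x" and y: "(\<lambda>A. \<pi> A $ 2 $ 2) \<in> Mchar V E r s y"
    using assms by (auto simp: rep_xy_def)
  note nest = this(1)[unfolded nest_rep_def Let_def]
  show "A \<in> Tplus V E r s \<Longrightarrow> B \<in> Tplus V E r s \<Longrightarrow> \<pi> (oadd A B) = \<pi> A + \<pi> B"
    and "A \<in> Tplus V E r s \<Longrightarrow> B \<in> Tplus V E r s \<Longrightarrow> \<pi> (ocomp A B) = \<pi> A ** \<pi> B"
    and "A \<in> Tplus V E r s \<Longrightarrow> \<pi> (osmul c A) $ i $ j = c * \<pi> A $ i $ j"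
    and "\<pi> ` Tplus V E r s = {M. M $ 1 $ 2 = 0}"
    using nest by blast+
  show "\<pi> (Pop V E r s x) $ 1 $ 1 = 1" "\<pi> (Pop V E r s y) $ 2 $ 2 = 1"
    using x y by (simp_all add: Mchar_def)
qed

lemma rep_xy_triangular:
  assumes "\<pi> \<in> rep_xy V E r s x y" "A \<in> Tplus V E r s"
  shows "\<pi> A $ 1 $ 2 = 0"
proof -
  have "\<pi> A \<in> \<pi> ` Tplus V E r s"
    using assms(2) by (rule imageI)
  then show ?thesis
    by (simp add: rep_xy_image[OF assms(1)])
qed

lemma rep_xy_onto:
  assumes "\<pi> \<in> rep_xy V E r s x y" "M $ 1 $ 2 = 0"
  shows "\<exists>B\<in>Tplus V E r s. \<pi> B = M"
proof -
  have "M \<in> \<pi> ` Tplus V E r s"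
    by (simp add: rep_xy_image[OF assms(1)] assms(2))
  then show ?thesis
    by (auto elim: imageE)
qed

lemma rep_xy_ozero:
  assumes "\<pi> \<in> rep_xy V E r s x y" "x \<in> V"
  shows "\<pi> ozero = 0"
proof -
  have "\<pi> (osmul 0 ozero) = 0"
    using rep_xy_osmul[OF assms(1) ozero_Tplus[OF assms(2)], of 0] by (simp add: vec_eq_iff)
  moreover have "osmul 0 ozero = ozero"
    by (simp add: osmul_def vsmul_def ozero_def)
  ultimately show ?thesis
    by metis
qed

lemma KxyI:
  "k \<in> Tplus V E r s \<Longrightarrow> (\<And>\<pi>. \<pi> \<in> rep_xy V E r s x y \<Longrightarrow> \<pi> k = 0) \<Longrightarrow> k \<in> Kxy V E r s x y"
  by (simp add: Kxy_def)

lemma KxyD: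
  assumes "k \<in> Kxy V E r s x y"
  shows Kxy_Tplus: "k \<in> Tplus V E r s"
    and Kxy_rep_xy: "\<pi> \<in> rep_xy V E r s x y \<Longrightarrow> \<pi> k = 0"
  using assms by (auto simp: Kxy_def)

lemma ozero_Kxy: "x \<in> V \<Longrightarrow> ozero \<in> Kxy V E r s x y"
  by (intro KxyI ozero_Tplus rep_xy_ozero)

lemma Kxy_oadd:
  assumes k: "k \<in> Kxy V E r s x y" and l: "l \<in> Kxy V E r s x y"
  shows "oadd k l \<in> Kxy V E r s x y"
proof (rule KxyI)
  show "oadd k l \<in> Tplus V E r s"
    using Tplus_oadd[OF Kxy_Tplus[OF k] Kxy_Tplus[OF l]] .
  fix \<pi> assume "\<pi> \<in> rep_xy V E r s x y"
  then show "\<pi> (oadd k l) = 0"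
    using k l by (simp add: rep_xy_oadd Kxy_Tplus Kxy_rep_xy)
qed

lemma Kxy_osmul:
  assumes k: "k \<in> Kxy V E r s x y"
  shows "osmul c k \<in> Kxy V E r s x y"
proof (rule KxyI)
  show "osmul c k \<in> Tplus V E r s"
    using Tplus_osmul[OF Kxy_Tplus[OF k]] .
  fix \<pi> assume "\<pi> \<in> rep_xy V E r s x y"
  then show "\<pi> (osmul c k) = 0"
    using k by (simp add: vec_eq_iff rep_xy_osmul Kxy_Tplus Kxy_rep_xy)
qed

lemma coset_self: "ozero \<in> K \<Longrightarrow> X \<in> coset K X"
  unfolding coset_def by (rule CollectI, rule exI[of _ ozero]) simp

lemma coset_eqI:
  assumes add_closed: "\<And>k l. k \<in> K \<Longrightarrow> l \<in> K \<Longrightarrow> oadd k l \<in> K"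
    and D: "D \<in> K" "osmul (-1) D \<in> K" and A: "A = oadd B D"
  shows "coset K A = coset K B"
proof -
  have "oadd A k = oadd B (oadd D k)" "oadd B k = oadd A (oadd (osmul (-1) D) k)" for k
    using A by (simp_all add: oadd_def vadd_def osmul_def vsmul_def fun_eq_iff add.assoc)
  moreover have "oadd D k \<in> K" "oadd (osmul (-1) D) k \<in> K" if "k \<in> K" for k
    using add_closed D that by blast+
  ultimately show ?thesis
    unfolding coset_def by blast
qed

lemma Kxy_coset_eqI:
  assumes "X \<in> Tplus V E r s" "Y \<in> Tplus V E r s"
    and "\<And>\<pi>. \<pi> \<in> rep_xy V E r s x y \<Longrightarrow> \<pi> X = \<pi> Y"
  shows "coset (Kxy V E r s x y) X = coset (Kxy V E r s x y) Y"
proof (rule coset_eqI[OF Kxy_oadd])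
  let ?D = "oadd X (osmul (-1) Y)"
  show "?D \<in> Kxy V E r s x y"
  proof (rule KxyI)
    show "?D \<in> Tplus V E r s"
      using assms by (intro Tplus_oadd Tplus_osmul)
    fix \<pi> assume "\<pi> \<in> rep_xy V E r s x y"
    then show "\<pi> ?D = 0"
      using assms by (simp add: rep_xy_oadd rep_xy_osmul Tplus_osmul vec_eq_iff)
  qed
  then show "osmul (-1) ?D \<in> Kxy V E r s x y"
    by (rule Kxy_osmul)
  show "X = oadd Y ?D"
    by (simp add: oadd_def vadd_def osmul_def vsmul_def)
qed

lemma qrep_coset:
  assumes "ozero \<in> K"
  shows "\<exists>k\<in>K. qrep (coset K X) = oadd X k"
proof -
  have "qrep (coset K X) \<in> coset K X"
    unfolding qrep_def by (rule someI[where P="\<lambda>A. A \<in> coset K X", OF coset_self[OF assms]])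
  then show ?thesis
    by (auto simp: coset_def)
qed

lemma qrep_Kxy_coset:
  assumes "x \<in> V" "X \<in> Tplus V E r s"
  shows "qrep (coset (Kxy V E r s x y) X) \<in> Tplus V E r s"
    and "\<pi> \<in> rep_xy V E r s x y \<Longrightarrow> \<pi> (qrep (coset (Kxy V E r s x y) X)) = \<pi> X"
proof -
  obtain k where k: "k \<in> Kxy V E r s x y" "qrep (coset (Kxy V E r s x y) X) = oadd X k"
    using qrep_coset[OF ozero_Kxy[OF assms(1)]] by blast
  show "qrep (coset (Kxy V E r s x y) X) \<in> Tplus V E r s"
    using k assms by (simp add: Tplus_oadd Kxy_Tplus)
  show "\<pi> \<in> rep_xy V E r s x y \<Longrightarrow> \<pi> (qrep (coset (Kxy V E r s x y) X)) = \<pi> X"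
    using k assms by (simp add: rep_xy_oadd Kxy_Tplus Kxy_rep_xy)
qed

lemma qrep_quot_carrier:
  "x \<in> V \<Longrightarrow> X \<in> quot_carrier (Tplus V E r s) (Kxy V E r s x y) \<Longrightarrow> qrep X \<in> Tplus V E r s"
  by (auto simp: quot_carrier_def qrep_Kxy_coset)

lemma quot_carrier_qmul:
  assumes "x \<in> V"
    and "X \<in> quot_carrier (Tplus V E r s) (Kxy V E r s x y)"
    and "Y \<in> quot_carrier (Tplus V E r s) (Kxy V E r s x y)"
  shows "qmul (Kxy V E r s x y) X Y \<in> quot_carrier (Tplus V E r s) (Kxy V E r s x y)"
proof -
  have "ocomp (qrep X) (qrep Y) \<in> Tplus V E r s"
    using assms by (intro Tplus_ocomp qrep_quot_carrier)
  then show ?thesis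
    by (simp add: qmul_def quot_carrier_def)
qed

lemma rep_xy_qrep_qadd:
  assumes "x \<in> V" "\<pi> \<in> rep_xy V E r s x y"
    and "X \<in> quot_carrier (Tplus V E r s) (Kxy V E r s x y)"
    and "Y \<in> quot_carrier (Tplus V E r s) (Kxy V E r s x y)"
  shows "\<pi> (qrep (qadd (Kxy V E r s x y) X Y)) = \<pi> (qrep X) + \<pi> (qrep Y)"
  using assms qrep_quot_carrier[OF assms(1,3)] qrep_quot_carrier[OF assms(1,4)]
  by (simp add: qadd_def qrep_Kxy_coset Tplus_oadd rep_xy_oadd)

lemma rep_xy_qrep_qmul:
  assumes "x \<in> V" "\<pi> \<in> rep_xy V E r s x y"
    and "X \<in> quot_carrier (Tplus V E r s) (Kxy V E r s x y)"
    and "Y \<in> quot_carrier (Tplus V E r s) (Kxy V E r s x y)"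
  shows "\<pi> (qrep (qmul (Kxy V E r s x y) X Y)) = \<pi> (qrep X) ** \<pi> (qrep Y)"
  using assms qrep_quot_carrier[OF assms(1,3)] qrep_quot_carrier[OF assms(1,4)]
  by (simp add: qmul_def qrep_Kxy_coset Tplus_ocomp rep_xy_ocomp)

lemma surj_character_vanishes_on_jacobson_rad:
  fixes \<phi> :: "'a \<Rightarrow> 'b::field"
  assumes a: "a \<in> jacobson_rad R add mul"
    and mul_closed: "\<And>u v. u \<in> R \<Longrightarrow> v \<in> R \<Longrightarrow> mul u v \<in> R"
    and \<phi>_add: "\<And>u v. u \<in> R \<Longrightarrow> v \<in> R \<Longrightarrow> \<phi> (add u v) = \<phi> u + \<phi> v"
    and \<phi>_mul: "\<And>u v. u \<in> R \<Longrightarrow> v \<in> R \<Longrightarrow> \<phi> (mul u v) = \<phi> u * \<phi> v"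
    and \<phi>_surj: "\<phi> ` R = UNIV"
  shows "\<phi> a = 0"
proof (rule ccontr)
  assume nonzero: "\<phi> a \<noteq> 0"
  obtain b where b: "b \<in> R" "\<phi> b = inverse (\<phi> a)"
    using \<phi>_surj by (metis UNIV_I imageE)
  have aR: "a \<in> R"
    using a by (simp add: jacobson_rad_def)
  obtain c where c: "c \<in> R" "add c (mul b a) = mul c (mul b a)"
    using a b(1) by (auto simp: jacobson_rad_def)
  have "\<phi> (mul b a) = 1"
    using nonzero b aR by (simp add: \<phi>_mul)
  then have "\<phi> c + 1 = \<phi> c"
    using c mul_closed[OF b(1) aR] \<phi>_add[of c "mul b a"] \<phi>_mul[of c "mul b a"] by simp
  then show False
    by simp
qed

lemma triangular_diag_mult:
  fixes X Y :: "'a::comm_ring_1 ^ 2 ^ 2"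
  assumes "X $ 1 $ 2 = 0" "Y $ 1 $ 2 = 0"
  shows "(X ** Y) $ i $ i = X $ i $ i * Y $ i $ i"
  using exhaust_2[of i] assms by (auto simp: matrix_matrix_mult_def sum_2)

lemma rep_xy_diag_jacobson_rad:
  assumes x: "x \<in> V" and \<pi>: "\<pi> \<in> rep_xy V E r s x y" and A: "A \<in> Tplus V E r s"
    and rad: "coset (Kxy V E r s x y) A \<in>
      jacobson_rad (quot_carrier (Tplus V E r s) (Kxy V E r s x y))
        (qadd (Kxy V E r s x y)) (qmul (Kxy V E r s x y))"
  shows "\<pi> A $ i $ i = 0"
proof -
  let ?R = "quot_carrier (Tplus V E r s) (Kxy V E r s x y)"
  let ?\<phi> = "\<lambda>X. \<pi> (qrep X) $ i $ i"
  have "?\<phi> (coset (Kxy V E r s x y) A) = 0"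
  proof (rule surj_character_vanishes_on_jacobson_rad[OF rad])
    fix X Y assume "X \<in> ?R" "Y \<in> ?R"
    then show "qmul (Kxy V E r s x y) X Y \<in> ?R"
      and "?\<phi> (qadd (Kxy V E r s x y) X Y) = ?\<phi> X + ?\<phi> Y"
      and "?\<phi> (qmul (Kxy V E r s x y) X Y) = ?\<phi> X * ?\<phi> Y"
      using x \<pi> by (simp_all add: quot_carrier_qmul rep_xy_qrep_qadd rep_xy_qrep_qmul
          triangular_diag_mult rep_xy_triangular qrep_quot_carrier)
  next
    have "z \<in> ?\<phi> ` ?R" for z
    proof -
      let ?M = "\<chi> j k. if j = i \<and> k = i then z else 0"
      have "?M $ 1 $ 2 = 0"
        by auto
      then obtain B where "B \<in> Tplus V E r s" "\<pi> B = ?M"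
        using rep_xy_onto[OF \<pi>] by blast
      then have "?\<phi> (coset (Kxy V E r s x y) B) = z"
        using x \<pi> by (simp add: qrep_Kxy_coset)
      then show ?thesis
        using \<open>B \<in> Tplus V E r s\<close> by (auto simp: quot_carrier_def)
    qed
    then show "?\<phi> ` ?R = UNIV"
      by blast
  qed
  then show ?thesis
    using x \<pi> A by (simp add: qrep_Kxy_coset)
qed

lemma triangular_compression:
  fixes A P Q :: "'a::comm_ring_1 ^ 2 ^ 2"
  assumes "A $ 1 $ 1 = 0" "A $ 1 $ 2 = 0" "A $ 2 $ 2 = 0"
    and "P $ 1 $ 1 = 1" "P $ 1 $ 2 = 0" "Q $ 1 $ 2 = 0" "Q $ 2 $ 2 = 1"
  shows "Q ** (A ** P) = A"
  using assms by (simp add: vec_eq_iff forall_2 matrix_matrix_mult_def sum_2)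

theorem lemma2p8:
  fixes V :: "'v set" and E :: "'e set" and r s :: "'e \<Rightarrow> 'v" and x y :: 'v
    and A :: "('v, 'e) oper"
  assumes "graph V E r s" and "countable V" and "countable E"
    and "x \<in> V" and "y \<in> V" and "x \<noteq> y"
    and "A \<in> Tplus V E r s"
    and "coset (Kxy V E r s x y) A \<in>
           jacobson_rad (quot_carrier (Tplus V E r s) (Kxy V E r s x y))
             (qadd (Kxy V E r s x y)) (qmul (Kxy V E r s x y))"
  shows "coset (Kxy V E r s x y) A =
         coset (Kxy V E r s x y) (ocomp (Pop V E r s y) (ocomp A (Pop V E r s x)))"
proof (rule Kxy_coset_eqI)
  have Px: "Pop V E r s x \<in> Tplus V E r s" and Py: "Pop V E r s y \<in> Tplus V E r s"
    using assms(4,5) by (auto intro: gen_alg_Tplus gen_alg.gen)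
  then show "ocomp (Pop V E r s y) (ocomp A (Pop V E r s x)) \<in> Tplus V E r s"
    using assms(7) by (intro Tplus_ocomp)
  fix \<pi> assume \<pi>: "\<pi> \<in> rep_xy V E r s x y"
  have "\<pi> (ocomp (Pop V E r s y) (ocomp A (Pop V E r s x)))
      = \<pi> (Pop V E r s y) ** (\<pi> A ** \<pi> (Pop V E r s x))"
    using \<pi> Px Py assms(7) by (simp add: rep_xy_ocomp Tplus_ocomp)
  also have "\<dots> = \<pi> A"
    using \<pi> Px Py assms(4,7,8)
    by (intro triangular_compression)
      (simp_all add: rep_xy_diag_jacobson_rad rep_xy_triangular rep_xy_Pop_11 rep_xy_Pop_22)
  finally show "\<pi> A = \<pi> (ocomp (Pop V E r s y) (ocomp A (Pop V E r s x)))"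
    by simp
qed (use assms(7) in simp)

end
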